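(* In the setting below, fix $e\in G_0$, and let $F_e=\{f\in G_0: T_e\cap S_f\neq\emptyset\}$. For $f\in F_e$ put $$\omega_{e,f}=1_e\delta_e\#\sum_{l\in T_e\cap S_f}v_l.$$ Then: (i) the orbits of the conjugation action of $U_e$ on $W_e$ are exactly the sets $\{w_{e,l}: l\in T_e\cap S_f\}$, $f\in F_e$; these are pairwise distinct for distinct $f$, and $\omega_{e,f}$ is the sum of the elements of the corresponding orbit; (ii) $w_e=\sum_{f\in F_e}\omega_{e,f}$; (iii) the elements $\omega_{e,f}$, $f\in F_e$, are central orthogonal idempotents of $B_e$; (iv) for each $f\in F_e$, $B_{e,f}:=B_e\omega_{e,f}=\bigoplus_{g\in G_e,\ l\in T_e\cap S_f}E_g\delta_g\#v_l$ is an ideal of $B_e$ which is a unital algebra with identity $\omega_{e,f}$; (v) $B_e=\bigoplus_{f\in F_e}B_{e,f}$.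
   Context: Groupoid conventions. A groupoid is a small category with all morphisms invertible, regarded as the set $G$ of morphisms. For $g\in G$ we have $d(g)=g^{-1}g$ and $r(g)=gg^{-1}$. The product $gh$ is defined iff $d(g)=r(h)$, and then $d(gh)=d(h)$, $r(gh)=r(g)$. $G^2=\{(g,h):d(g)=r(h)\}$, and $G_0$ is the set of identities. For $e\in G_0$: - $G_e=\{g: d(g)=r(g)=e\}$; - $S_e=\{g\in G: d(g)=e\}$; - $T_e=\{g\in G: r(g)=e\}$. Actions. An action of $G$ on a ring $R$ is a pair $\beta=(\{E_g\},\{\beta_g\})$ where each $E_g=E_{r(g)}$ is an ideal of $R$, each $\beta_g:E_{g^{-1}}\to E_g$ is a ring isomorphism, $\beta_e=\mathrm{id}$ for $e\in G_0$, and $\beta_g\beta_h=\beta_{gh}$ on $E_{h^{-1}}$ for $(g,h)\in G^2$. Skew groupoid ring. $R\star_\beta G=\bigoplus_{g\in G}E_g\delta_g$ (the $\delta_g$ are formal symbols), with $(x\delta_g)(y\delta_h)=x\beta_g(y)\delta_{gh}$ if $(g,h)\in G^2$ and $0$ otherwise, for $x\in E_g$, $y\in E_h$. $KG^*$. The free $K$-module with basis $\{v_g\}_{g\in G}$, with $v_gv_h=\delta_{g,h}v_g$ and identity $\sum_g v_g$. Weak smash product. For a unital $G$-graded algebra $A=\bigoplus A_g$ (with $A_gA_h\subseteq A_{gh}$ if $(g,h)\in G^2$, and $0$ otherwise), $KG^*$ acts by $v_h\cdot a=a_h$ (the $h$-component). $A\#KG^*=A\otimes_K KG^*$ with $(a\#v_g)(b\#v_h)=a(v_{gh^{-1}}\cdot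 b)\#v_h$ if $d(g)=d(h)$, and $0$ otherwise. Setting. $K$ is a commutative unital ring and $G$ is a finite groupoid. $R$ is a not necessarily unital $K$-algebra with an action $\beta$ of $G$ (by $K$-linear maps) such that each $E_e$, $e\in G_0$, has an identity element $1_e$; put $1_g:=1_{r(g)}$, the identity of $E_g$. Then $R\star_\beta G$ is a unital $K$-algebra with identity $\sum_{e\in G_0}1_e\delta_e$. It is $G$-graded with $g$-component $E_g\delta_g$, so that $v_k\cdot(a_g\delta_g)=\delta_{k,g}a_g\delta_g$. Let $B=(R\star_\beta G)\#KG^*=\bigoplus_{g,h\in G}E_g\delta_g\#v_h$ and $$B_0=\bigoplus_{g,h\in G:\ d(g)=r(g)=r(h)}E_g\delta_g\#v_h.$$ Further notation: - $B_e=\bigoplus_{g\in G_e,\,h\in T_e}E_g\delta_g\#v_h$, a unital subalgebra of $B_0$ with identity $w_e=1_e\delta_e\#\sum_{h\in T_e}v_h$; - $W_e=\{w_{e,h}:=1_e\delta_e\#v_h: h\in T_e\}$; - $U_e=\{1_g\delta_g\#\sum_{h\in T_e}v_h: g\in G_e\}$, a subgroup of the units of $B_e$, acting on $W_e$ by conjugation. *)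

theory Defs
  imports Main "HOL-Library.Function_Algebras"
begin

definition gdom :: "('g \<Rightarrow> 'g \<Rightarrow> 'g) \<Rightarrow> ('g \<Rightarrow> 'g) \<Rightarrow> 'g \<Rightarrow> 'g" where
  "gdom pr iv g = pr (iv g) g"

definition grng :: "('g \<Rightarrow> 'g \<Rightarrow> 'g) \<Rightarrow> ('g \<Rightarrow> 'g) \<Rightarrow> 'g \<Rightarrow> 'g" where
  "grng pr iv g = pr g (iv g)"

text \<open>The product pr g h is (meant to be) defined iff gdom g = grng h.\<close>
definition groupoid :: "'g set \<Rightarrow> ('g \<Rightarrow> 'g \<Rightarrow> 'g) \<Rightarrow> ('g \<Rightarrow> 'g) \<Rightarrow> bool" where
  "groupoid G pr iv \<longleftrightarrow>
     (\<forall>g\<in>G. iv g \<in> G \<and> iv (iv g) = g) \<and>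
     (\<forall>g\<in>G. \<forall>h\<in>G. gdom pr iv g = grng pr iv h \<longrightarrow>
          pr g h \<in> G \<and> gdom pr iv (pr g h) = gdom pr iv h \<and> grng pr iv (pr g h) = grng pr iv g) \<and>
     (\<forall>g\<in>G. \<forall>h\<in>G. \<forall>k\<in>G. gdom pr iv g = grng pr iv h \<and> gdom pr iv h = grng pr iv k \<longrightarrow>
          pr (pr g h) k = pr g (pr h k)) \<and>
     (\<forall>g\<in>G. pr (grng pr iv g) g = g \<and> pr g (gdom pr iv g) = g)"

definition G0 :: "'g set \<Rightarrow> ('g \<Rightarrow> 'g \<Rightarrow> 'g) \<Rightarrow> ('g \<Rightarrow> 'g) \<Rightarrow> 'g set" where
  "G0 G pr iv = gdom pr iv ` G"

definition Gloc :: "'g set \<Rightarrow> ('g \<Rightarrow> 'g \<Rightarrow> 'g) \<Rightarrow> ('g \<Rightarrow> 'g) \<Rightarrow> 'g \<Rightarrow> 'g set" where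
  "Gloc G pr iv e = {g\<in>G. gdom pr iv g = e \<and> grng pr iv g = e}"

definition Sset :: "'g set \<Rightarrow> ('g \<Rightarrow> 'g \<Rightarrow> 'g) \<Rightarrow> ('g \<Rightarrow> 'g) \<Rightarrow> 'g \<Rightarrow> 'g set" where
  "Sset G pr iv e = {g\<in>G. gdom pr iv g = e}"

definition Tset :: "'g set \<Rightarrow> ('g \<Rightarrow> 'g \<Rightarrow> 'g) \<Rightarrow> ('g \<Rightarrow> 'g) \<Rightarrow> 'g \<Rightarrow> 'g set" where
  "Tset G pr iv e = {g\<in>G. grng pr iv g = e}"

definition ring_ideal :: "'r::ring set \<Rightarrow> bool" where
  "ring_ideal I \<longleftrightarrow> 0 \<in> I \<and> (\<forall>x\<in>I. \<forall>y\<in>I. x + y \<in> I) \<and> (\<forall>x\<in>I. - x \<in> I) \<and>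
     (\<forall>x\<in>I. \<forall>r. r * x \<in> I \<and> x * r \<in> I)"

definition groupoid_action ::
  "'g set \<Rightarrow> ('g \<Rightarrow> 'g \<Rightarrow> 'g) \<Rightarrow> ('g \<Rightarrow> 'g) \<Rightarrow> ('g \<Rightarrow> 'r::ring set) \<Rightarrow> ('g \<Rightarrow> 'r \<Rightarrow> 'r) \<Rightarrow> bool" where
  "groupoid_action G pr iv E \<beta> \<longleftrightarrow>
     (\<forall>g\<in>G. E g = E (grng pr iv g) \<and> ring_ideal (E g)) \<and>
     (\<forall>g\<in>G. bij_betw (\<beta> g) (E (iv g)) (E g) \<and>
        (\<forall>x\<in>E (iv g). \<forall>y\<in>E (iv g). \<beta> g (x + y) = \<beta> g x + \<beta> g y \<and> \<beta> g (x * y) = \<beta> g x * \<beta> g y)) \<and>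
     (\<forall>e\<in>G0 G pr iv. \<forall>x\<in>E e. \<beta> e x = x) \<and>
     (\<forall>g\<in>G. \<forall>h\<in>G. gdom pr iv g = grng pr iv h \<longrightarrow>
        (\<forall>x\<in>E (iv h). \<beta> g (\<beta> h x) = \<beta> (pr g h) x))"

definition local_units ::
  "'g set \<Rightarrow> ('g \<Rightarrow> 'g \<Rightarrow> 'g) \<Rightarrow> ('g \<Rightarrow> 'g) \<Rightarrow> ('g \<Rightarrow> 'r::ring set) \<Rightarrow> ('g \<Rightarrow> 'r) \<Rightarrow> bool" where
  "local_units G pr iv E one \<longleftrightarrow>
     (\<forall>e\<in>G0 G pr iv. one e \<in> E e \<and> (\<forall>x\<in>E e. one e * x = x \<and> x * one e = x))"

text \<open>Elements of the skew groupoid ring are functions x with x g in E g (the coefficient of delta g).\<close>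
definition skew_mult ::
  "'g set \<Rightarrow> ('g \<Rightarrow> 'g \<Rightarrow> 'g) \<Rightarrow> ('g \<Rightarrow> 'g) \<Rightarrow> ('g \<Rightarrow> 'r::ring \<Rightarrow> 'r)
     \<Rightarrow> ('g \<Rightarrow> 'r) \<Rightarrow> ('g \<Rightarrow> 'r) \<Rightarrow> ('g \<Rightarrow> 'r)" where
  "skew_mult G pr iv \<beta> x y = (\<lambda>k. \<Sum>p\<in>{(g,h)\<in>G\<times>G. gdom pr iv g = grng pr iv h \<and> pr g h = k}.
        x (fst p) * \<beta> (fst p) (y (snd p)))"

text \<open>Action of v k on the graded algebra: take the k-component.\<close>
definition gcomp :: "'g \<Rightarrow> ('g \<Rightarrow> 'r::zero) \<Rightarrow> ('g \<Rightarrow> 'r)" where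
  "gcomp k a = (\<lambda>g. if g = k then a g else 0)"

text \<open>Elements of A # KG* are functions h |-> (A-coefficient of v h).
  (a # v g)(b # v h) = a (v (g h^-1) . b) # v h if d g = d h, 0 otherwise.\<close>
definition smash_mult ::
  "'g set \<Rightarrow> ('g \<Rightarrow> 'g \<Rightarrow> 'g) \<Rightarrow> ('g \<Rightarrow> 'g) \<Rightarrow> ('a \<Rightarrow> 'a \<Rightarrow> 'a::comm_monoid_add)
     \<Rightarrow> ('g \<Rightarrow> 'a \<Rightarrow> 'a) \<Rightarrow> ('g \<Rightarrow> 'a) \<Rightarrow> ('g \<Rightarrow> 'a) \<Rightarrow> ('g \<Rightarrow> 'a)" where
  "smash_mult G pr iv multA compA x y =
     (\<lambda>h. \<Sum>g\<in>{g\<in>G. gdom pr iv g = gdom pr iv h}. multA (x g) (compA (pr g (iv h)) (y h)))"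

text \<open>Multiplication in B = (R * G) # KG*; an element b has b h g = coefficient of (delta g # v h).\<close>
definition bmult ::
  "'g set \<Rightarrow> ('g \<Rightarrow> 'g \<Rightarrow> 'g) \<Rightarrow> ('g \<Rightarrow> 'g) \<Rightarrow> ('g \<Rightarrow> 'r::ring \<Rightarrow> 'r)
     \<Rightarrow> ('g \<Rightarrow> 'g \<Rightarrow> 'r) \<Rightarrow> ('g \<Rightarrow> 'g \<Rightarrow> 'r) \<Rightarrow> ('g \<Rightarrow> 'g \<Rightarrow> 'r)" where
  "bmult G pr iv \<beta> = smash_mult G pr iv (skew_mult G pr iv \<beta>) gcomp"

text \<open>The element a delta g # v h of B.\<close>
definition bsmash :: "'g \<Rightarrow> 'r::zero \<Rightarrow> 'g \<Rightarrow> ('g \<Rightarrow> 'g \<Rightarrow> 'r)" where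
  "bsmash g a h = (\<lambda>l. if l = h then (\<lambda>k. if k = g then a else 0) else 0)"

definition Bcar :: "'g set \<Rightarrow> ('g \<Rightarrow> 'r::zero set) \<Rightarrow> ('g \<Rightarrow> 'g \<Rightarrow> 'r) set" where
  "Bcar G E = {b. \<forall>h g. b h g \<in> (if h \<in> G \<and> g \<in> G then E g else {0})}"

definition Bloc :: "'g set \<Rightarrow> ('g \<Rightarrow> 'g \<Rightarrow> 'g) \<Rightarrow> ('g \<Rightarrow> 'g) \<Rightarrow> ('g \<Rightarrow> 'r::zero set) \<Rightarrow> 'g
     \<Rightarrow> ('g \<Rightarrow> 'g \<Rightarrow> 'r) set" where
  "Bloc G pr iv E e = {b \<in> Bcar G E. \<forall>h g. b h g \<noteq> 0 \<longrightarrow> g \<in> Gloc G pr iv e \<and> h \<in> Tset G pr iv e}"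

definition wunit :: "'g set \<Rightarrow> ('g \<Rightarrow> 'g \<Rightarrow> 'g) \<Rightarrow> ('g \<Rightarrow> 'g) \<Rightarrow> ('g \<Rightarrow> 'r::comm_monoid_add) \<Rightarrow> 'g
     \<Rightarrow> ('g \<Rightarrow> 'g \<Rightarrow> 'r)" where
  "wunit G pr iv one e = (\<Sum>h\<in>Tset G pr iv e. bsmash e (one e) h)"

definition Wset :: "'g set \<Rightarrow> ('g \<Rightarrow> 'g \<Rightarrow> 'g) \<Rightarrow> ('g \<Rightarrow> 'g) \<Rightarrow> ('g \<Rightarrow> 'r::zero) \<Rightarrow> 'g
     \<Rightarrow> ('g \<Rightarrow> 'g \<Rightarrow> 'r) set" where
  "Wset G pr iv one e = (\<lambda>h. bsmash e (one e) h) ` Tset G pr iv e"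

definition Uset :: "'g set \<Rightarrow> ('g \<Rightarrow> 'g \<Rightarrow> 'g) \<Rightarrow> ('g \<Rightarrow> 'g) \<Rightarrow> ('g \<Rightarrow> 'r::comm_monoid_add) \<Rightarrow> 'g
     \<Rightarrow> ('g \<Rightarrow> 'g \<Rightarrow> 'r) set" where
  "Uset G pr iv one e =
     (\<lambda>g. \<Sum>h\<in>Tset G pr iv e. bsmash g (one (grng pr iv g)) h) ` Gloc G pr iv e"

definition conj_orbit ::
  "'g set \<Rightarrow> ('g \<Rightarrow> 'g \<Rightarrow> 'g) \<Rightarrow> ('g \<Rightarrow> 'g) \<Rightarrow> ('g \<Rightarrow> 'r::ring set) \<Rightarrow> ('g \<Rightarrow> 'r \<Rightarrow> 'r)
     \<Rightarrow> ('g \<Rightarrow> 'r) \<Rightarrow> 'g \<Rightarrow> ('g \<Rightarrow> 'g \<Rightarrow> 'r) \<Rightarrow> ('g \<Rightarrow> 'g \<Rightarrow> 'r) set" where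
  "conj_orbit G pr iv E \<beta> one e w =
     {c. \<exists>u\<in>Uset G pr iv one e. \<exists>u'\<in>Bloc G pr iv E e.
          bmult G pr iv \<beta> u u' = wunit G pr iv one e \<and>
          bmult G pr iv \<beta> u' u = wunit G pr iv one e \<and>
          c = bmult G pr iv \<beta> (bmult G pr iv \<beta> u w) u'}"

definition Fset :: "'g set \<Rightarrow> ('g \<Rightarrow> 'g \<Rightarrow> 'g) \<Rightarrow> ('g \<Rightarrow> 'g) \<Rightarrow> 'g \<Rightarrow> 'g set" where
  "Fset G pr iv e = {f \<in> G0 G pr iv. Tset G pr iv e \<inter> Sset G pr iv f \<noteq> {}}"

definition omega :: "'g set \<Rightarrow> ('g \<Rightarrow> 'g \<Rightarrow> 'g) \<Rightarrow> ('g \<Rightarrow> 'g) \<Rightarrow> ('g \<Rightarrow> 'r::comm_monoid_add) \<Rightarrow> 'g \<Rightarrow> 'g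
     \<Rightarrow> ('g \<Rightarrow> 'g \<Rightarrow> 'r)" where
  "omega G pr iv one e f = (\<Sum>l\<in>Tset G pr iv e \<inter> Sset G pr iv f. bsmash e (one e) l)"

definition Blocf :: "'g set \<Rightarrow> ('g \<Rightarrow> 'g \<Rightarrow> 'g) \<Rightarrow> ('g \<Rightarrow> 'g) \<Rightarrow> ('g \<Rightarrow> 'r::ring set) \<Rightarrow> ('g \<Rightarrow> 'r \<Rightarrow> 'r)
     \<Rightarrow> ('g \<Rightarrow> 'r) \<Rightarrow> 'g \<Rightarrow> 'g \<Rightarrow> ('g \<Rightarrow> 'g \<Rightarrow> 'r) set" where
  "Blocf G pr iv E \<beta> one e f = (\<lambda>b. bmult G pr iv \<beta> b (omega G pr iv one e f)) ` Bloc G pr iv E e"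

definition sub_ideal :: "('b \<Rightarrow> 'b \<Rightarrow> 'b) \<Rightarrow> 'b::ab_group_add set \<Rightarrow> 'b set \<Rightarrow> bool" where
  "sub_ideal m A I \<longleftrightarrow> I \<subseteq> A \<and> 0 \<in> I \<and> (\<forall>x\<in>I. \<forall>y\<in>I. x + y \<in> I) \<and> (\<forall>x\<in>I. - x \<in> I) \<and>
     (\<forall>x\<in>I. \<forall>a\<in>A. m a x \<in> I \<and> m x a \<in> I)"

end

theory Submission
  imports Defs
begin

text \<open>
  An element of \<open>B\<^sub>e\<close> is a coefficient function \<open>x h k\<close> (coefficient of
  \<open>\<delta>\<^sub>k # v\<^sub>h\<close>) supported on \<open>T\<^sub>e \<times> G\<^sub>e\<close>.
  First, groupoid facts: the isotropy group \<open>G\<^sub>e\<close> acts on \<open>T\<^sub>e\<close> by left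
  multiplication, and its orbits are exactly the fibres \<open>T\<^sub>e \<inter> S\<^sub>f\<close> of the
  domain map.  Second, the product of \<open>B\<^sub>e\<close> is computed explicitly as a sum over
  \<open>G\<^sub>e\<close>; from it we obtain closed formulas for multiplication by the units
  \<open>u\<^sub>g\<close>, showing that conjugation by \<open>u\<^sub>g\<close> sends \<open>w\<^sub>e\<^sub>,\<^sub>l\<close> to \<open>w\<^sub>e\<^sub>,\<^sub>g\<^sub>l\<close>, and by the
  idempotents \<open>\<omega>\<^sub>e\<^sub>,\<^sub>f\<close>, showing that both left and right multiplication by
  \<open>\<omega>\<^sub>e\<^sub>,\<^sub>f\<close> restrict an element to the rows \<open>h \<in> S\<^sub>f\<close>.  Since the inverse of \<open>u\<^sub>g\<close>
  in \<open>B\<^sub>e\<close> is unique (\<open>\<beta>\<^sub>g\<close> is injective), the \<open>U\<^sub>e\<close>-orbit of \<open>w\<^sub>e\<^sub>,\<^sub>l\<close> is the image of the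
  \<open>G\<^sub>e\<close>-orbit of \<open>l\<close>.
\<close>

lemma sum_fun_apply: "(\<Sum>i\<in>A. F i) x = (\<Sum>i\<in>A. F i x)"
  by (induction A rule: infinite_finite_induct) auto

lemma sum_eq_single:
  assumes "finite A" "a \<in> A" "\<And>b. b \<in> A \<Longrightarrow> b \<noteq> a \<Longrightarrow> f b = 0"
  shows "sum f A = f a"
proof -
  have "sum f A = sum f {a}"
    using assms by (intro sum.mono_neutral_right) auto
  then show ?thesis by simp
qed

section \<open>Groupoids\<close>

locale groupoid_struct =
  fixes G :: "'g set" and pr :: "'g \<Rightarrow> 'g \<Rightarrow> 'g" and iv :: "'g \<Rightarrow> 'g"
  assumes grp: "groupoid G pr iv"
begin

abbreviation "d \<equiv> gdom pr iv"
abbreviation "r \<equiv> grng pr iv"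

lemma iv_G: "g \<in> G \<Longrightarrow> iv g \<in> G" and iv_iv: "g \<in> G \<Longrightarrow> iv (iv g) = g"
  using grp unfolding groupoid_def by auto

lemma pr_G: "g \<in> G \<Longrightarrow> h \<in> G \<Longrightarrow> d g = r h \<Longrightarrow> pr g h \<in> G"
  and d_pr: "g \<in> G \<Longrightarrow> h \<in> G \<Longrightarrow> d g = r h \<Longrightarrow> d (pr g h) = d h"
  and r_pr: "g \<in> G \<Longrightarrow> h \<in> G \<Longrightarrow> d g = r h \<Longrightarrow> r (pr g h) = r g"
  using grp unfolding groupoid_def by blast+

lemma assoc: "g \<in> G \<Longrightarrow> h \<in> G \<Longrightarrow> k \<in> G \<Longrightarrow> d g = r h \<Longrightarrow> d h = r k \<Longrightarrow>
   pr (pr g h) k = pr g (pr h k)"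
  using grp unfolding groupoid_def by blast

lemma lunit: "g \<in> G \<Longrightarrow> pr (r g) g = g" and runit: "g \<in> G \<Longrightarrow> pr g (d g) = g"
  using grp unfolding groupoid_def by blast+

lemma d_iv: "g \<in> G \<Longrightarrow> d (iv g) = r g" and r_iv: "g \<in> G \<Longrightarrow> r (iv g) = d g"
  by (simp_all add: gdom_def grng_def iv_iv)

lemma pr_iv_r: "pr g (iv g) = r g" and pr_iv_d: "pr (iv g) g = d g"
  by (simp_all add: gdom_def grng_def)

lemma pr_pr_iv: assumes "g \<in> G" "h \<in> G" "d g = r h" shows "pr (pr g h) (iv h) = g"
proof -
  have "pr (pr g h) (iv h) = pr g (pr h (iv h))"
    using assms by (intro assoc) (auto simp: iv_G r_iv)
  then show ?thesis using assms runit[of g] by (simp add: pr_iv_r)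
qed

lemma pr_iv_pr: assumes "m \<in> G" "h \<in> G" "d m = d h" shows "pr (pr m (iv h)) h = m"
  using pr_pr_iv[of m "iv h"] assms by (simp add: iv_G iv_iv r_iv)

end

locale groupoid_object = groupoid_struct G pr iv for G :: "'g set" and pr iv +
  fixes e :: 'g
  assumes e: "e \<in> G0 G pr iv"
begin

abbreviation "T \<equiv> Tset G pr iv e"
abbreviation "Ge \<equiv> Gloc G pr iv e"
abbreviation "S \<equiv> Sset G pr iv"

lemma Ge_iff: "g \<in> Ge \<longleftrightarrow> g \<in> G \<and> d g = e \<and> r g = e" by (simp add: Gloc_def)
lemma T_iff: "h \<in> T \<longleftrightarrow> h \<in> G \<and> r h = e" by (simp add: Tset_def)
lemma S_iff: "h \<in> S f \<longleftrightarrow> h \<in> G \<and> d h = f" by (simp add: Sset_def)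

lemma eG: "e \<in> G" and de: "d e = e" and re: "r e = e"
proof -
  obtain g where g: "g \<in> G" "e = d g" using e unfolding G0_def by auto
  have "pr (iv g) g \<in> G" "d (pr (iv g) g) = d g" "r (pr (iv g) g) = r (iv g)"
    using g pr_G d_pr r_pr iv_G d_iv by auto
  then show "e \<in> G" "d e = e" "r e = e" using g r_iv by (simp_all add: pr_iv_d)
qed

lemma ive: "iv e = e"
proof -
  have "pr e (iv e) = e" using re by (simp add: pr_iv_r)
  moreover have "pr (r (iv e)) (iv e) = iv e" using lunit iv_G eG by blast
  ultimately show ?thesis using r_iv eG de by simp
qed

lemma Ge_e: "e \<in> Ge" using eG de re by (simp add: Ge_iff)

lemma iv_Ge: "g \<in> Ge \<Longrightarrow> iv g \<in> Ge"
  by (auto simp: Ge_iff iv_G d_iv r_iv)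
lemma Ge_pr: "a \<in> Ge \<Longrightarrow> b \<in> Ge \<Longrightarrow> pr a b \<in> Ge"
  using pr_G d_pr r_pr by (auto simp: Ge_iff)
lemma Ge_runit: "a \<in> Ge \<Longrightarrow> pr a e = a" using runit[of a] by (auto simp: Ge_iff)
lemma Ge_rinv: "a \<in> Ge \<Longrightarrow> pr a (iv a) = e" by (simp add: pr_iv_r Ge_iff)

lemma T_pr: "g \<in> Ge \<Longrightarrow> h \<in> T \<Longrightarrow> pr g h \<in> T"
  using pr_G r_pr by (auto simp: Ge_iff T_iff)
lemma d_pr_T: "g \<in> Ge \<Longrightarrow> h \<in> T \<Longrightarrow> d (pr g h) = d h"
  using d_pr by (auto simp: Ge_iff T_iff)
lemma T_lunit: "h \<in> T \<Longrightarrow> pr e h = h" using lunit[of h] by (auto simp: T_iff)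

lemma T_assoc: "a \<in> Ge \<Longrightarrow> b \<in> Ge \<Longrightarrow> h \<in> T \<Longrightarrow> pr (pr a b) h = pr a (pr b h)"
  using assoc by (auto simp: Ge_iff T_iff)

lemma T_cancel: assumes "a \<in> Ge" "h \<in> T" "l \<in> T" shows "pr a h = l \<longleftrightarrow> h = pr (iv a) l"
proof
  assume "pr a h = l"
  then have "pr (iv a) l = pr (pr (iv a) a) h" using assms T_assoc iv_Ge by metis
  then show "h = pr (iv a) l" using assms T_lunit by (simp add: pr_iv_d Ge_iff)
next
  assume "h = pr (iv a) l"
  then have "pr a h = pr (pr a (iv a)) l" using assms T_assoc iv_Ge by metis
  then show "pr a h = l" using assms Ge_rinv T_lunit by simp
qed

lemma Ge_T: "g \<in> Ge \<Longrightarrow> g \<in> T" by (simp add: Ge_iff T_iff)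

lemma lcancel: "a \<in> Ge \<Longrightarrow> b \<in> Ge \<Longrightarrow> k \<in> Ge \<Longrightarrow> pr a k = b \<longleftrightarrow> k = pr (iv a) b"
  using T_cancel Ge_T by blast

lemma rcancel: assumes "a \<in> Ge" "b \<in> Ge" "k \<in> Ge" shows "pr k a = b \<longleftrightarrow> k = pr b (iv a)"
proof
  assume "pr k a = b"
  then show "k = pr b (iv a)" using assms pr_pr_iv[of k a] by (simp add: Ge_iff)
next
  assume "k = pr b (iv a)"
  then show "pr k a = b" using assms pr_iv_pr[of b a] by (simp add: Ge_iff)
qed

text \<open>The \<open>G\<^sub>e\<close>-orbit of \<open>l \<in> T\<^sub>e\<close> is the fibre \<open>T\<^sub>e \<inter> S\<^sub>d\<^sub>(\<^sub>l\<^sub>)\<close>: the element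
  \<open>l' l\<^sup>-\<^sup>1 \<in> G\<^sub>e\<close> moves \<open>l\<close> to any \<open>l'\<close> with the same domain.\<close>
lemma Ge_orbit: assumes l: "l \<in> T" shows "(\<lambda>g. pr g l) ` Ge = T \<inter> S (d l)"
proof
  show "(\<lambda>g. pr g l) ` Ge \<subseteq> T \<inter> S (d l)"
  proof
    fix l' assume "l' \<in> (\<lambda>g. pr g l) ` Ge"
    then obtain g where "g \<in> Ge" "l' = pr g l" by blast
    then show "l' \<in> T \<inter> S (d l)"
      using T_pr[of g l] d_pr_T[of g l] l by (simp add: S_iff T_iff)
  qed
next
  show "T \<inter> S (d l) \<subseteq> (\<lambda>g. pr g l) ` Ge"
  proof
    fix l' assume l': "l' \<in> T \<inter> S (d l)"
    have "pr l' (iv l) \<in> Ge"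
      using l l' pr_G d_pr r_pr iv_G r_iv d_iv by (auto simp: Ge_iff T_iff S_iff)
    moreover have "l' = pr (pr l' (iv l)) l"
      using pr_iv_pr l l' by (simp add: T_iff S_iff)
    ultimately show "l' \<in> (\<lambda>g. pr g l) ` Ge" by blast
  qed
qed

lemma dT_F: "h \<in> T \<Longrightarrow> d h \<in> Fset G pr iv e"
proof -
  assume h: "h \<in> T"
  then have "h \<in> T \<inter> S (d h)" "d h \<in> G0 G pr iv" by (auto simp: T_iff S_iff G0_def)
  then show ?thesis unfolding Fset_def by blast
qed

end

section \<open>The local algebra \<open>B\<^sub>e\<close>\<close>

locale local_smash = groupoid_object G pr iv e for G :: "'g set" and pr iv e +
  fixes E :: "'g \<Rightarrow> 'r::ring set" and \<beta> :: "'g \<Rightarrow> 'r \<Rightarrow> 'r" and one :: "'g \<Rightarrow> 'r"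
  assumes fin: "finite G"
    and act: "groupoid_action G pr iv E \<beta>"
    and units: "local_units G pr iv E one"
begin

abbreviation "B \<equiv> Bloc G pr iv E e"
abbreviation "mult \<equiv> bmult G pr iv \<beta>"

lemma finT: "finite T" using fin by (simp add: Tset_def)
lemma finGe: "finite Ge" using fin by (simp add: Gloc_def)

lemma E_r: "g \<in> G \<Longrightarrow> E g = E (r g)" and ideal: "g \<in> G \<Longrightarrow> ring_ideal (E g)"
  using act unfolding groupoid_action_def by auto
lemma beta_bij: "g \<in> G \<Longrightarrow> bij_betw (\<beta> g) (E (iv g)) (E g)"
  and beta_add: "g \<in> G \<Longrightarrow> x \<in> E (iv g) \<Longrightarrow> y \<in> E (iv g) \<Longrightarrow> \<beta> g (x + y) = \<beta> g x + \<beta> g y"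
  and beta_mult: "g \<in> G \<Longrightarrow> x \<in> E (iv g) \<Longrightarrow> y \<in> E (iv g) \<Longrightarrow> \<beta> g (x * y) = \<beta> g x * \<beta> g y"
  using act unfolding groupoid_action_def by auto
lemma beta_id: "x \<in> E e \<Longrightarrow> \<beta> e x = x"
  using act e unfolding groupoid_action_def by auto

lemma zero_E: "g \<in> G \<Longrightarrow> 0 \<in> E g" using ideal unfolding ring_ideal_def by auto

lemma beta0: "g \<in> G \<Longrightarrow> \<beta> g 0 = 0"
proof -
  assume g: "g \<in> G"
  have "\<beta> g (0 + 0) = \<beta> g 0 + \<beta> g 0" using beta_add[OF g] zero_E iv_G g by blast
  then show ?thesis by simp
qed

lemma one_E: "one e \<in> E e" and one_l: "x \<in> E e \<Longrightarrow> one e * x = x"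
  and one_r: "x \<in> E e \<Longrightarrow> x * one e = x"
  using units e unfolding local_units_def by auto

lemma E_Ge: "g \<in> Ge \<Longrightarrow> E g = E e" using E_r by (auto simp: Ge_iff)

lemma E_mult: "x \<in> E e \<Longrightarrow> y \<in> E e \<Longrightarrow> x * y \<in> E e"
  and E_add: "x \<in> E e \<Longrightarrow> y \<in> E e \<Longrightarrow> x + y \<in> E e"
  and E_uminus: "x \<in> E e \<Longrightarrow> - x \<in> E e"
  using ideal[OF eG] unfolding ring_ideal_def by auto

lemma sum_E: "finite A \<Longrightarrow> (\<And>i. i \<in> A \<Longrightarrow> H i \<in> E e) \<Longrightarrow> sum H A \<in> E e"
  by (induction A rule: finite_induct) (auto intro: E_add zero_E eG)

lemma one_zero_E: "(if Q then one e else 0) \<in> E e" using one_E zero_E eG by simp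

text \<open>Each \<open>\<beta>\<^sub>g\<close>, \<open>g \<in> G\<^sub>e\<close>, is a ring automorphism of \<open>E\<^sub>e\<close>; hence it fixes \<open>1\<^sub>e\<close>.\<close>
lemma beta_E: "g \<in> Ge \<Longrightarrow> x \<in> E e \<Longrightarrow> \<beta> g x \<in> E e"
  using beta_bij[of g] E_Ge[of g] E_Ge[OF iv_Ge[of g]] by (auto simp: Ge_iff bij_betw_def)

lemma beta_inj: "g \<in> Ge \<Longrightarrow> x \<in> E e \<Longrightarrow> y \<in> E e \<Longrightarrow> \<beta> g x = \<beta> g y \<Longrightarrow> x = y"
  using beta_bij[of g] E_Ge[OF iv_Ge[of g]] by (auto simp: Ge_iff bij_betw_def inj_on_def)

lemma beta_one: assumes g: "g \<in> Ge" shows "\<beta> g (one e) = one e"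
proof -
  have gG: "g \<in> G" using g by (simp add: Ge_iff)
  have EE: "E (iv g) = E e" "E g = E e" using E_Ge g iv_Ge by auto
  obtain y where y: "y \<in> E e" "\<beta> g y = one e"
    using beta_bij[OF gG] one_E EE unfolding bij_betw_def by (metis imageE)
  have "one e = \<beta> g (one e * y)" using y one_l by simp
  also have "\<dots> = \<beta> g (one e) * one e" using beta_mult[OF gG] EE one_E y by simp
  also have "\<dots> = \<beta> g (one e)" using one_r beta_E[OF g one_E] by simp
  finally show ?thesis by simp
qed

lemma B_iff: "x \<in> B \<longleftrightarrow> (\<forall>h k. x h k \<in> E e) \<and> (\<forall>h k. x h k \<noteq> 0 \<longrightarrow> k \<in> Ge \<and> h \<in> T)"
proof -
  have "x h k \<in> (if h \<in> G \<and> k \<in> G then E k else {0}) \<longleftrightarrow> x h k \<in> E e"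
    if "x h k \<noteq> 0 \<longrightarrow> k \<in> Ge \<and> h \<in> T" for h k
    using that zero_E eG E_Ge by (cases "x h k = 0") (auto simp: Ge_iff T_iff)
  then show ?thesis unfolding Bloc_def Bcar_def by blast
qed

lemma B_E: "x \<in> B \<Longrightarrow> x h k \<in> E e" using B_iff by blast
lemma B_supp: "x \<in> B \<Longrightarrow> x h k \<noteq> 0 \<Longrightarrow> k \<in> Ge \<and> h \<in> T" using B_iff by blast
lemma B_zero: "x \<in> B \<Longrightarrow> \<not> (h \<in> T \<and> k \<in> Ge) \<Longrightarrow> x h k = 0" using B_supp by blast

text \<open>Unfolding \<open>bmult\<close>, the coefficient of \<open>\<delta>\<^sub>k # v\<^sub>h\<close> in \<open>x y\<close> is a sum over triples
  \<open>(m, g, k')\<close> with \<open>d m = d h\<close> and \<open>g k' = k\<close>, where only \<open>k' = m h\<^sup>-\<^sup>1\<close> contributes.\<close>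
definition prod_index :: "'g \<Rightarrow> 'g \<Rightarrow> ('g \<times> 'g \<times> 'g) set" where
  "prod_index h k = {m\<in>G. d m = d h} \<times> {(g,k')\<in>G\<times>G. d g = r k' \<and> pr g k' = k}"

definition prod_term :: "('g \<Rightarrow> 'g \<Rightarrow> 'r) \<Rightarrow> ('g \<Rightarrow> 'g \<Rightarrow> 'r) \<Rightarrow> 'g \<Rightarrow> 'g \<times> 'g \<times> 'g \<Rightarrow> 'r" where
  "prod_term x y h = (\<lambda>(m,g,k'). x m g * \<beta> g (if k' = pr m (iv h) then y h k' else 0))"

lemma bmult_expand: "mult x y h k = (\<Sum>q\<in>prod_index h k. prod_term x y h q)"
  unfolding bmult_def smash_mult_def skew_mult_def gcomp_def sum_fun_apply prod_index_def
    sum.cartesian_product prod_term_def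
  by (simp add: split_def)

lemma prod_term_nonzero:
  assumes x: "x \<in> B" and y: "y \<in> B" and q: "q \<in> prod_index h k" "prod_term x y h q \<noteq> 0"
  shows "h \<in> T \<and> k \<in> Ge \<and> snd (snd q) \<in> Ge \<and>
    q = (pr (snd (snd q)) h, pr k (iv (snd (snd q))), snd (snd q))"
proof -
  obtain m g k' where qq: "q = (m,g,k')" by (cases q) auto
  have mM: "m \<in> G" "d m = d h" and gP: "g \<in> G" "k' \<in> G" "d g = r k'" "pr g k' = k"
    using q(1) qq by (auto simp: prod_index_def)
  have Fq: "x m g * \<beta> g (if k' = pr m (iv h) then y h k' else 0) \<noteq> 0"
    using q(2) qq by (simp add: prod_term_def)
  then have "x m g \<noteq> 0" by auto
  then have gm: "g \<in> Ge" "m \<in> T" using B_supp[OF x] by auto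
  have kk: "k' = pr m (iv h)" and "y h k' \<noteq> 0"
    using Fq beta0[OF gP(1)] by (cases "k' = pr m (iv h)"; auto)+
  then have kh: "k' \<in> Ge" "h \<in> T" using B_supp[OF y] by auto
  have "k \<in> Ge" using gP gm kh Ge_pr by auto
  moreover have "g = pr k (iv k')" using pr_pr_iv[of g k'] gP by simp
  moreover have "m = pr k' h" using pr_iv_pr[OF mM(1) _ mM(2)] kk kh by (simp add: T_iff)
  ultimately show ?thesis using qq kh by simp
qed

lemma prod_index_param: assumes hT: "h \<in> T" and kG: "k \<in> Ge" and k': "k' \<in> Ge"
  shows "(pr k' h, pr k (iv k'), k') \<in> prod_index h k"
proof -
  have "pr k' h \<in> G" "d (pr k' h) = d h" using k' hT T_pr d_pr_T by (auto simp: T_iff)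
  moreover have "pr k (iv k') \<in> Ge" using kG k' Ge_pr iv_Ge by blast
  moreover have "pr (pr k (iv k')) k' = k" using pr_iv_pr[of k k'] kG k' by (simp add: Ge_iff)
  ultimately show ?thesis using k' by (auto simp: prod_index_def Ge_iff)
qed

definition loc_prod :: "('g \<Rightarrow> 'g \<Rightarrow> 'r) \<Rightarrow> ('g \<Rightarrow> 'g \<Rightarrow> 'r) \<Rightarrow> 'g \<Rightarrow> 'g \<Rightarrow> 'r" where
  "loc_prod x y h k = (if h \<in> T \<and> k \<in> Ge then
     (\<Sum>k'\<in>Ge. x (pr k' h) (pr k (iv k')) * \<beta> (pr k (iv k')) (y h k')) else 0)"

lemma mult_B: assumes x: "x \<in> B" and y: "y \<in> B" shows "mult x y = loc_prod x y"
proof (intro ext)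
  fix h k
  have "prod_index h k \<subseteq> G \<times> G \<times> G" by (auto simp: prod_index_def)
  then have fin_idx: "finite (prod_index h k)" using fin by (meson finite_SigmaI finite_subset)
  show "mult x y h k = loc_prod x y h k"
  proof (cases "h \<in> T \<and> k \<in> Ge")
    case False
    then have "\<forall>q\<in>prod_index h k. prod_term x y h q = 0"
      using prod_term_nonzero[OF x y] by blast
    then show ?thesis using False by (simp only: bmult_expand loc_prod_def if_False sum.neutral)
  next
    case True
    then have hT: "h \<in> T" and kG: "k \<in> Ge" by auto
    define \<phi> where "\<phi> = (\<lambda>k'. (pr k' h, pr k (iv k'), k'))"
    have sub: "\<phi> ` Ge \<subseteq> prod_index h k" using prod_index_param hT kG by (auto simp: \<phi>_def)
    have off: "prod_term x y h q = 0" if q: "q \<in> prod_index h k - \<phi> ` Ge" for q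
    proof (rule ccontr)
      assume nz: "prod_term x y h q \<noteq> 0"
      have "snd (snd q) \<in> Ge" "q = \<phi> (snd (snd q))"
        using prod_term_nonzero[OF x y _ nz] q unfolding \<phi>_def by blast+
      then show False using q by blast
    qed
    have "mult x y h k = (\<Sum>q\<in>\<phi> ` Ge. prod_term x y h q)"
      unfolding bmult_expand using off sub by (intro sum.mono_neutral_right fin_idx) auto
    also have "\<dots> = (\<Sum>k'\<in>Ge. prod_term x y h (\<phi> k'))"
      by (subst sum.reindex) (auto simp: inj_on_def \<phi>_def)
    also have "\<dots> = loc_prod x y h k"
      using True pr_pr_iv[of _ h]
      by (auto simp: loc_prod_def prod_term_def \<phi>_def Ge_iff T_iff intro!: sum.cong)
    finally show ?thesis .
  qed
qed

lemma mult_closed: assumes x: "x \<in> B" and y: "y \<in> B" shows "mult x y \<in> B"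
proof -
  have "loc_prod x y h k \<in> E e" for h k
    using zero_E[OF eG] by (auto simp: loc_prod_def intro!: sum_E finGe E_mult B_E[OF x]
        beta_E B_E[OF y] Ge_pr iv_Ge)
  moreover have "loc_prod x y h k \<noteq> 0 \<Longrightarrow> k \<in> Ge \<and> h \<in> T" for h k
    by (simp add: loc_prod_def split: if_splits)
  ultimately show ?thesis using mult_B[OF x y] B_iff by auto
qed

definition unit_elt :: "'g \<Rightarrow> 'g \<Rightarrow> 'g \<Rightarrow> 'r" where
  "unit_elt g = (\<Sum>h\<in>T. bsmash g (one (r g)) h)"

abbreviation "w l \<equiv> bsmash e (one e) l"

lemma Uset_eq: "Uset G pr iv one e = unit_elt ` Ge" by (simp add: Uset_def unit_elt_def)

lemma bsmash_apply: "bsmash g a l h k = (if h = l \<and> k = g then a else 0)"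
  by (simp add: bsmash_def)

lemma unit_elt_apply: "g \<in> Ge \<Longrightarrow> unit_elt g h k = (if h \<in> T \<and> k = g then one e else 0)"
  using finT by (simp add: unit_elt_def sum_fun_apply bsmash_def Ge_iff)

lemma omega_apply: "omega G pr iv one e f h k = (if h \<in> T \<inter> S f \<and> k = e then one e else 0)"
  using finT by (simp add: omega_def sum_fun_apply bsmash_def)

lemma wunit_apply: "wunit G pr iv one e h k = (if h \<in> T \<and> k = e then one e else 0)"
  using finT by (simp add: wunit_def sum_fun_apply bsmash_def)

lemma bsmash_B: "g \<in> Ge \<Longrightarrow> l \<in> T \<Longrightarrow> bsmash g (one e) l \<in> B"
  unfolding B_iff bsmash_apply using one_zero_E by auto
lemma unit_elt_B: "g \<in> Ge \<Longrightarrow> unit_elt g \<in> B"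
  unfolding B_iff using unit_elt_apply one_zero_E by auto
lemma omega_B: "omega G pr iv one e f \<in> B"
  unfolding B_iff omega_apply using one_zero_E Ge_e by auto

definition restrict_rows :: "'g \<Rightarrow> ('g \<Rightarrow> 'g \<Rightarrow> 'r) \<Rightarrow> 'g \<Rightarrow> 'g \<Rightarrow> 'r" where
  "restrict_rows f x = (\<lambda>h k. if h \<in> S f then x h k else 0)"

lemma restrict_rows_B: "x \<in> B \<Longrightarrow> restrict_rows f x \<in> B"
  unfolding B_iff restrict_rows_def using zero_E eG by auto

text \<open>Right multiplication by \<open>\<omega>\<^sub>e\<^sub>,\<^sub>f\<close>: only the summand \<open>k' = e\<close> survives.\<close>
lemma mult_omega_r: assumes x: "x \<in> B"
  shows "mult x (omega G pr iv one e f) = restrict_rows f x"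
proof (intro ext)
  fix h k
  show "mult x (omega G pr iv one e f) h k = restrict_rows f x h k"
  proof (cases "h \<in> T \<and> k \<in> Ge")
    case False then show ?thesis using B_zero[OF x False]
      by (auto simp add: mult_B[OF x omega_B] loc_prod_def restrict_rows_def)
  next
    case True
    then have hT: "h \<in> T" and kG: "k \<in> Ge" by auto
    have "(\<Sum>k'\<in>Ge. x (pr k' h) (pr k (iv k')) * \<beta> (pr k (iv k')) (omega G pr iv one e f h k'))
        = x (pr e h) (pr k (iv e)) * \<beta> (pr k (iv e)) (omega G pr iv one e f h e)"
      using beta0 Ge_pr[OF kG iv_Ge]
      by (intro sum_eq_single[OF finGe Ge_e]) (simp add: omega_apply Ge_iff)
    also have "\<dots> = restrict_rows f x h k"
      using hT kG T_lunit Ge_runit ive beta_one beta0 one_r B_E[OF x]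
      by (auto simp: omega_apply restrict_rows_def Ge_iff)
    finally show ?thesis using True by (simp add: mult_B[OF x omega_B] loc_prod_def)
  qed
qed

text \<open>Left multiplication by \<open>\<omega>\<^sub>e\<^sub>,\<^sub>f\<close>: only the summand \<open>k' = k\<close> survives, and
  \<open>d (k h) = d h\<close>; so \<open>\<omega>\<^sub>e\<^sub>,\<^sub>f\<close> is central in \<open>B\<^sub>e\<close>.\<close>
lemma mult_omega_l: assumes x: "x \<in> B"
  shows "mult (omega G pr iv one e f) x = restrict_rows f x"
proof (intro ext)
  fix h k
  show "mult (omega G pr iv one e f) x h k = restrict_rows f x h k"
  proof (cases "h \<in> T \<and> k \<in> Ge")
    case False then show ?thesis using B_zero[OF x False]
      by (auto simp add: mult_B[OF omega_B x] loc_prod_def restrict_rows_def)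
  next
    case True
    then have hT: "h \<in> T" and kG: "k \<in> Ge" by auto
    have "(\<Sum>k'\<in>Ge. omega G pr iv one e f (pr k' h) (pr k (iv k')) * \<beta> (pr k (iv k')) (x h k'))
        = omega G pr iv one e f (pr k h) (pr k (iv k)) * \<beta> (pr k (iv k)) (x h k)"
    proof (rule sum_eq_single[OF finGe kG])
      fix b assume b: "b \<in> Ge" "b \<noteq> k"
      have "pr k (iv b) \<noteq> e" using rcancel[OF iv_Ge[OF b(1)] Ge_e kG] b T_lunit iv_iv
        by (auto simp: Ge_iff T_iff)
      then show "omega G pr iv one e f (pr b h) (pr k (iv b)) * \<beta> (pr k (iv b)) (x h b) = 0"
        by (simp add: omega_apply)
    qed
    also have "\<dots> = restrict_rows f x h k"
      using hT kG T_pr[OF kG hT] d_pr_T[OF kG hT] Ge_rinv beta_id one_l B_E[OF x]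
      by (auto simp: omega_apply restrict_rows_def S_iff T_iff)
    finally show ?thesis using True by (simp add: mult_B[OF omega_B x] loc_prod_def)
  qed
qed

lemma mult_unit_l: assumes g: "g \<in> Ge" and x: "x \<in> B"
  shows "mult (unit_elt g) x h k = (if h \<in> T \<and> k \<in> Ge then \<beta> g (x h (pr (iv g) k)) else 0)"
proof (cases "h \<in> T \<and> k \<in> Ge")
  case False then show ?thesis by (auto simp add: mult_B[OF unit_elt_B[OF g] x] loc_prod_def)
next
  case True
  then have hT: "h \<in> T" and kG: "k \<in> Ge" by auto
  define a where "a = pr (iv g) k"
  have aG: "a \<in> Ge" using a_def Ge_pr iv_Ge g kG by simp
  have ga: "pr g a = k" using lcancel[OF g kG aG] a_def by simp
  have ka: "pr k (iv a) = g"
    using rcancel[OF iv_Ge[OF aG] g kG] ga iv_iv aG by (simp add: Ge_iff)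
  have "(\<Sum>k'\<in>Ge. unit_elt g (pr k' h) (pr k (iv k')) * \<beta> (pr k (iv k')) (x h k'))
      = unit_elt g (pr a h) (pr k (iv a)) * \<beta> (pr k (iv a)) (x h a)"
  proof (rule sum_eq_single[OF finGe aG])
    fix b assume b: "b \<in> Ge" "b \<noteq> a"
    have "pr k (iv b) \<noteq> g"
      using rcancel[OF iv_Ge[OF b(1)] g kG] lcancel[OF g kG b(1)] b a_def iv_iv g
        lcancel[OF iv_Ge[OF g] b(1) kG]
      by (auto simp: Ge_iff T_iff)
    then show "unit_elt g (pr b h) (pr k (iv b)) * \<beta> (pr k (iv b)) (x h b) = 0"
      by (simp add: unit_elt_apply[OF g])
  qed
  also have "\<dots> = \<beta> g (x h a)"
    using ka hT T_pr[OF aG hT] one_l beta_E[OF g B_E[OF x]] by (simp add: unit_elt_apply[OF g])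
  finally show ?thesis using True a_def by (simp add: mult_B[OF unit_elt_B[OF g] x] loc_prod_def)
qed

lemma mult_unit_r: assumes g: "g \<in> Ge" and x: "x \<in> B"
  shows "mult x (unit_elt g) h k = (if h \<in> T \<and> k \<in> Ge then x (pr g h) (pr k (iv g)) else 0)"
proof (cases "h \<in> T \<and> k \<in> Ge")
  case False then show ?thesis by (auto simp add: mult_B[OF x unit_elt_B[OF g]] loc_prod_def)
next
  case True
  then have hT: "h \<in> T" and kG: "k \<in> Ge" by auto
  have "(\<Sum>k'\<in>Ge. x (pr k' h) (pr k (iv k')) * \<beta> (pr k (iv k')) (unit_elt g h k'))
      = x (pr g h) (pr k (iv g)) * \<beta> (pr k (iv g)) (unit_elt g h g)"
    using beta0 Ge_pr[OF kG iv_Ge]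
    by (intro sum_eq_single[OF finGe g]) (simp add: unit_elt_apply[OF g] Ge_iff)
  also have "\<dots> = x (pr g h) (pr k (iv g))"
    using hT beta_one Ge_pr[OF kG iv_Ge[OF g]] one_r B_E[OF x] by (simp add: unit_elt_apply[OF g])
  finally show ?thesis using True by (simp add: mult_B[OF x unit_elt_B[OF g]] loc_prod_def)
qed

lemma unit_inverse: assumes g: "g \<in> Ge"
  shows "mult (unit_elt g) (unit_elt (iv g)) = wunit G pr iv one e"
proof (intro ext)
  fix h k
  show "mult (unit_elt g) (unit_elt (iv g)) h k = wunit G pr iv one e h k"
  proof (cases "h \<in> T \<and> k \<in> Ge")
    case False then show ?thesis using mult_unit_l[OF g unit_elt_B[OF iv_Ge[OF g]]] Ge_e
      by (auto simp: wunit_apply)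
  next
    case True
    then have hT: "h \<in> T" and kG: "k \<in> Ge" by auto
    have "pr (iv g) k = iv g \<longleftrightarrow> k = e"
      using lcancel[OF iv_Ge[OF g] iv_Ge[OF g] kG] iv_iv g Ge_rinv[OF g] by (simp add: Ge_iff)
    then show ?thesis using mult_unit_l[OF g unit_elt_B[OF iv_Ge[OF g]]] hT kG
        unit_elt_apply[OF iv_Ge[OF g]] beta_one[OF g] beta0 g by (auto simp: wunit_apply Ge_iff)
  qed
qed

text \<open>\<dots> and the only right inverse of \<open>u\<^sub>g\<close> in \<open>B\<^sub>e\<close>, since \<open>\<beta>\<^sub>g\<close> is injective.\<close>
lemma unit_inverse_unique: assumes g: "g \<in> Ge" and u': "u' \<in> B"
  and eq: "mult (unit_elt g) u' = wunit G pr iv one e" shows "u' = unit_elt (iv g)"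
proof (intro ext)
  fix h k'
  show "u' h k' = unit_elt (iv g) h k'"
  proof (cases "h \<in> T \<and> k' \<in> Ge")
    case False then show ?thesis
      using B_zero[OF u' False] unit_elt_apply[OF iv_Ge[OF g]] iv_Ge[OF g] by auto
  next
    case True
    then have hT: "h \<in> T" and kG: "k' \<in> Ge" by auto
    define k where "k = pr g k'"
    have kG': "k \<in> Ge" using Ge_pr g kG k_def by simp
    have kk: "pr (iv g) k = k'" using lcancel[OF g kG' kG] k_def by simp
    have "mult (unit_elt g) u' h k = wunit G pr iv one e h k" using eq by simp
    then have lhs: "\<beta> g (u' h k') = (if k = e then one e else 0)"
      using mult_unit_l[OF g u'] hT kG' kk by (simp add: wunit_apply)
    have ke: "k = e \<longleftrightarrow> k' = iv g"
      using lcancel[OF g Ge_e kG] k_def Ge_runit[OF iv_Ge[OF g]] by simp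
    have rhs: "\<beta> g (unit_elt (iv g) h k') = (if k = e then one e else 0)"
      using unit_elt_apply[OF iv_Ge[OF g]] hT ke beta_one[OF g] beta0 g by (simp add: Ge_iff)
    have "unit_elt (iv g) h k' \<in> E e" using unit_elt_apply[OF iv_Ge[OF g]] one_zero_E by simp
    then show ?thesis using beta_inj[OF g B_E[OF u'] _ ] lhs rhs by metis
  qed
qed

text \<open>Conjugation by \<open>u\<^sub>g\<close> sends \<open>w\<^sub>e\<^sub>,\<^sub>l\<close> to \<open>w\<^sub>e\<^sub>,\<^sub>g\<^sub>l\<close>, via \<open>u\<^sub>g w\<^sub>e\<^sub>,\<^sub>l = 1\<^sub>e\<delta>\<^sub>g # v\<^sub>l\<close>.\<close>
lemma conj_unit_w: assumes g: "g \<in> Ge" and l: "l \<in> T"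
  shows "mult (mult (unit_elt g) (w l)) (unit_elt (iv g)) = w (pr g l)"
proof -
  have ig: "iv g \<in> Ge" using iv_Ge g by simp
  have gl: "pr g l \<in> T" using T_pr g l by simp
  have uw: "mult (unit_elt g) (w l) = bsmash g (one e) l"
  proof (intro ext)
    fix h k
    have "k \<in> Ge \<Longrightarrow> pr (iv g) k = e \<longleftrightarrow> k = g"
      using lcancel[OF iv_Ge[OF g] Ge_e] iv_iv g Ge_runit[OF g] by (simp add: Ge_iff)
    then show "mult (unit_elt g) (w l) h k = bsmash g (one e) l h k"
      using mult_unit_l[OF g bsmash_B[OF Ge_e l]] l g beta_one[OF g] beta0
      by (auto simp: bsmash_apply Ge_iff)
  qed
  show ?thesis unfolding uw
  proof (intro ext)
    fix h k
    have "h \<in> T \<Longrightarrow> pr (iv g) h = l \<longleftrightarrow> h = pr g l"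
      using T_cancel[OF ig _ l] iv_iv g by (simp add: Ge_iff)
    moreover have "k \<in> Ge \<Longrightarrow> pr k (iv (iv g)) = g \<longleftrightarrow> k = e"
      using rcancel[OF g g] iv_iv g Ge_rinv[OF g] by (simp add: Ge_iff)
    ultimately show "mult (bsmash g (one e) l) (unit_elt (iv g)) h k = w (pr g l) h k"
      using mult_unit_r[OF ig bsmash_B[OF g l]] gl Ge_e by (auto simp: bsmash_apply)
  qed
qed

text \<open>Hence the \<open>U\<^sub>e\<close>-orbit of \<open>w\<^sub>e\<^sub>,\<^sub>l\<close> is the image of the \<open>G\<^sub>e\<close>-orbit of \<open>l\<close>,
  i.e.\ of the fibre \<open>T\<^sub>e \<inter> S\<^sub>d\<^sub>(\<^sub>l\<^sub>)\<close>.\<close>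
lemma conj_orbit_w: assumes l: "l \<in> T"
  shows "conj_orbit G pr iv E \<beta> one e (w l) = w ` (T \<inter> S (d l))"
proof -
  have "conj_orbit G pr iv E \<beta> one e (w l) = (\<lambda>g. w (pr g l)) ` Ge"
  proof
    show "conj_orbit G pr iv E \<beta> one e (w l) \<subseteq> (\<lambda>g. w (pr g l)) ` Ge"
    proof
      fix c assume "c \<in> conj_orbit G pr iv E \<beta> one e (w l)"
      then obtain u u' where u: "u \<in> Uset G pr iv one e" and u': "u' \<in> B"
        and eq: "mult u u' = wunit G pr iv one e" and c: "c = mult (mult u (w l)) u'"
        unfolding conj_orbit_def by blast
      obtain g where g: "g \<in> Ge" and ug: "u = unit_elt g" using u Uset_eq by auto
      have "c = w (pr g l)" using c unit_inverse_unique[OF g u'] eq ug conj_unit_w[OF g l] by simp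
      then show "c \<in> (\<lambda>g. w (pr g l)) ` Ge" using g by blast
    qed
  next
    show "(\<lambda>g. w (pr g l)) ` Ge \<subseteq> conj_orbit G pr iv E \<beta> one e (w l)"
    proof
      fix c assume "c \<in> (\<lambda>g. w (pr g l)) ` Ge"
      then obtain g where g: "g \<in> Ge" and c: "c = w (pr g l)" by blast
      have "unit_elt g \<in> Uset G pr iv one e" using Uset_eq g by simp
      moreover have "unit_elt (iv g) \<in> B" using unit_elt_B[OF iv_Ge[OF g]] .
      moreover have "mult (unit_elt (iv g)) (unit_elt g) = wunit G pr iv one e"
        using unit_inverse[OF iv_Ge[OF g]] iv_iv g by (simp add: Ge_iff)
      moreover have "c = mult (mult (unit_elt g) (w l)) (unit_elt (iv g))"
        using c conj_unit_w[OF g l] by simp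
      ultimately show "c \<in> conj_orbit G pr iv E \<beta> one e (w l)"
        unfolding conj_orbit_def using unit_inverse[OF g] by blast
    qed
  qed
  also have "\<dots> = w ` ((\<lambda>g. pr g l) ` Ge)" by (simp only: image_image)
  also have "\<dots> = w ` (T \<inter> S (d l))" using Ge_orbit[OF l] by simp
  finally show ?thesis .
qed

subsection \<open>The orbit decomposition\<close>

abbreviation "F \<equiv> Fset G pr iv e"
abbreviation "om f \<equiv> omega G pr iv one e f"

lemma finF: "finite F"
proof -
  have "F \<subseteq> d ` G" by (auto simp: Fset_def G0_def)
  then show ?thesis using fin finite_subset by blast
qed

lemma orbits_W: "{conj_orbit G pr iv E \<beta> one e x | x. x \<in> Wset G pr iv one e}
    = (\<lambda>f. w ` (T \<inter> S f)) ` F"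
proof -
  have "{conj_orbit G pr iv E \<beta> one e x | x. x \<in> Wset G pr iv one e}
      = (\<lambda>l. w ` (T \<inter> S (d l))) ` T"
    using conj_orbit_w by (auto simp: Wset_def)
  also have "\<dots> = (\<lambda>f. w ` (T \<inter> S f)) ` (d ` T)" by (simp add: image_image)
  also have "d ` T = F"
  proof
    show "d ` T \<subseteq> F" using dT_F by blast
    show "F \<subseteq> d ` T" by (auto simp: Fset_def S_iff)
  qed
  finally show ?thesis .
qed

lemma w_inj: "one e \<noteq> 0 \<Longrightarrow> inj w"
  by (auto simp: inj_on_def fun_eq_iff bsmash_apply split: if_splits)

lemma orbits_W_inj: assumes "one e \<noteq> 0" shows "inj_on (\<lambda>f. w ` (T \<inter> S f)) F"
proof (rule inj_onI)
  fix f f' assume f: "f \<in> F" and eq: "w ` (T \<inter> S f) = w ` (T \<inter> S f')"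
  obtain l where l: "l \<in> T \<inter> S f" using f by (auto simp: Fset_def)
  then have "w l \<in> w ` (T \<inter> S f')" using eq by blast
  then have "l \<in> T \<inter> S f'" using inj_image_mem_iff[OF w_inj[OF assms]] by blast
  then show "f = f'" using l by (simp add: S_iff)
qed

text \<open>\<open>\<omega>\<^sub>e\<^sub>,\<^sub>f\<close> is the sum of its orbit (trivially so when \<open>1\<^sub>e = 0\<close>, where both vanish).\<close>
lemma omega_orbit_sum: "om f = \<Sum>(w ` (T \<inter> S f))"
proof (cases "one e = 0")
  case True
  then have "w ` (T \<inter> S f) \<subseteq> {0}" by (auto simp: bsmash_def fun_eq_iff)
  then have "\<Sum>(w ` (T \<inter> S f)) = 0" by (intro sum.neutral) blast
  moreover have "om f = 0" using True by (simp add: fun_eq_iff omega_apply)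
  ultimately show ?thesis by simp
next
  case False
  then show ?thesis using w_inj by (simp add: omega_def sum.reindex inj_on_subset)
qed

text \<open>(ii) \<open>w\<^sub>e = \<Sum>\<^sub>f\<^sub>\<in>\<^sub>F\<^sub>e \<omega>\<^sub>e\<^sub>,\<^sub>f\<close>, since \<open>T\<^sub>e\<close> is the disjoint union of the fibres.\<close>
lemma wunit_sum_omega: "wunit G pr iv one e = (\<Sum>f\<in>F. om f)"
proof (intro ext)
  fix h k
  show "wunit G pr iv one e h k = (\<Sum>f\<in>F. om f) h k"
  proof (cases "h \<in> T \<and> k = e")
    case False then show ?thesis by (auto simp: sum_fun_apply wunit_apply omega_apply)
  next
    case True
    have "(\<Sum>f\<in>F. om f h k) = om (d h) h k"
      using True by (intro sum_eq_single[OF finF dT_F]) (auto simp: omega_apply S_iff)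
    then show ?thesis using True by (simp add: sum_fun_apply wunit_apply omega_apply S_iff T_iff)
  qed
qed

lemma omega_idempotent: "mult (om f) (om f) = om f"
  using mult_omega_r[OF omega_B] by (auto simp: restrict_rows_def fun_eq_iff omega_apply)

lemma omega_central: "b \<in> B \<Longrightarrow> mult b (om f) = mult (om f) b"
  using mult_omega_r mult_omega_l by simp

lemma omega_orthogonal: "f \<noteq> f' \<Longrightarrow> mult (om f) (om f') = 0"
  using mult_omega_r[OF omega_B] by (auto simp: restrict_rows_def fun_eq_iff omega_apply S_iff)

lemma Blocf_iff:
  "x \<in> Blocf G pr iv E \<beta> one e f \<longleftrightarrow> x \<in> B \<and> (\<forall>h k. h \<notin> S f \<longrightarrow> x h k = 0)"
proof
  assume "x \<in> Blocf G pr iv E \<beta> one e f"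
  then show "x \<in> B \<and> (\<forall>h k. h \<notin> S f \<longrightarrow> x h k = 0)"
    using mult_omega_r restrict_rows_B by (auto simp: Blocf_def restrict_rows_def)
next
  assume x: "x \<in> B \<and> (\<forall>h k. h \<notin> S f \<longrightarrow> x h k = 0)"
  then have "x = mult x (om f)" using mult_omega_r by (auto simp: restrict_rows_def fun_eq_iff)
  then show "x \<in> Blocf G pr iv E \<beta> one e f" using x unfolding Blocf_def by blast
qed

lemma Blocf_eq: "Blocf G pr iv E \<beta> one e f = {b \<in> Bcar G E. \<forall>l g. b l g \<noteq> 0 \<longrightarrow>
    g \<in> Ge \<and> l \<in> T \<inter> S f}"
  using Blocf_iff unfolding Bloc_def by blast

lemma omega_Blocf: "om f \<in> Blocf G pr iv E \<beta> one e f"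
  unfolding Blocf_iff using omega_B by (simp add: omega_apply)

lemma Blocf_omega_unit:
  assumes "x \<in> Blocf G pr iv E \<beta> one e f"
  shows "mult (om f) x = x" and "mult x (om f) = x"
proof -
  have "x \<in> B" "restrict_rows f x = x"
    using assms unfolding Blocf_iff by (auto simp: restrict_rows_def fun_eq_iff)
  then show "mult (om f) x = x" "mult x (om f) = x"
    using mult_omega_r mult_omega_l by simp_all
qed

lemma add_nonzero_disj: "(a::'r) + b \<noteq> 0 \<Longrightarrow> a \<noteq> 0 \<or> b \<noteq> 0" by auto

text \<open>\<open>B\<^sub>e\<^sub>,\<^sub>f\<close> is an ideal: left multiplication keeps the rows, and right
  multiplication only permutes rows within a fibre (\<open>d (k' h) = d h\<close>).\<close>
lemma Blocf_ideal: "sub_ideal mult B (Blocf G pr iv E \<beta> one e f)"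
  unfolding sub_ideal_def
proof (intro conjI ballI)
  show "Blocf G pr iv E \<beta> one e f \<subseteq> B" using Blocf_iff by blast
  show "0 \<in> Blocf G pr iv E \<beta> one e f" unfolding Blocf_iff B_iff using zero_E eG by simp
  fix x assume "x \<in> Blocf G pr iv E \<beta> one e f"
  then have xB: "x \<in> B" and xz: "\<And>h k. h \<notin> S f \<Longrightarrow> x h k = 0" using Blocf_iff by auto
  show "- x \<in> Blocf G pr iv E \<beta> one e f" unfolding Blocf_iff B_iff using xB xz B_iff E_uminus by auto
  {
    fix y assume "y \<in> Blocf G pr iv E \<beta> one e f"
    then have yB: "y \<in> B" and yz: "\<And>h k. h \<notin> S f \<Longrightarrow> y h k = 0" using Blocf_iff by auto
    show "x + y \<in> Blocf G pr iv E \<beta> one e f" unfolding Blocf_iff B_iff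
      using xB yB xz yz B_iff E_add by (auto simp: plus_fun_def dest!: add_nonzero_disj)
  }
  fix a assume a: "a \<in> B"
  have "mult a x h k = 0" if "h \<notin> S f" for h k
    using that xz beta0 Ge_pr iv_Ge by (simp add: mult_B[OF a xB] loc_prod_def Ge_iff)
  then show "mult a x \<in> Blocf G pr iv E \<beta> one e f" unfolding Blocf_iff using mult_closed a xB by simp
  have "mult x a h k = 0" if h: "h \<notin> S f" for h k
  proof -
    have "pr k' h \<notin> S f" if "h \<in> T" "k' \<in> Ge" for k'
      using h d_pr_T[OF that(2,1)] T_pr[OF that(2,1)] that(1) by (auto simp: S_iff T_iff)
    then show ?thesis using xz by (simp add: mult_B[OF xB a] loc_prod_def)
  qed
  then show "mult x a \<in> Blocf G pr iv E \<beta> one e f" unfolding Blocf_iff using mult_closed a xB by simp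
qed

lemma sum_restrict_rows: assumes b: "b \<in> B" shows "b = (\<Sum>f\<in>F. restrict_rows f b)"
proof (intro ext)
  fix h k
  show "b h k = (\<Sum>f\<in>F. restrict_rows f b) h k"
  proof (cases "h \<in> T")
    case False then show ?thesis
      using B_zero[OF b] by (auto simp: sum_fun_apply restrict_rows_def intro!: sum.neutral)
  next
    case hT: True
    have "(\<Sum>f\<in>F. restrict_rows f b h k) = restrict_rows (d h) b h k"
      by (rule sum_eq_single[OF finF dT_F[OF hT]]) (auto simp: restrict_rows_def S_iff)
    then show ?thesis using hT by (simp add: sum_fun_apply restrict_rows_def S_iff T_iff)
  qed
qed

text \<open>\<dots> and the components in the \<open>B\<^sub>e\<^sub>,\<^sub>f\<close> of any such decomposition are these
  restrictions, because the row supports \<open>S\<^sub>f\<close> are pairwise disjoint.\<close>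
lemma Blocf_components:
  assumes x: "\<forall>f\<in>F. x f \<in> Blocf G pr iv E \<beta> one e f" and f: "f \<in> F"
  shows "x f = restrict_rows f (\<Sum>f'\<in>F. x f')"
proof (intro ext)
  fix h k
  have xz: "\<And>f h k. f \<in> F \<Longrightarrow> h \<notin> S f \<Longrightarrow> x f h k = 0" using x unfolding Blocf_iff by blast
  show "x f h k = restrict_rows f (\<Sum>f'\<in>F. x f') h k"
  proof (cases "h \<in> S f")
    case False then show ?thesis using xz f by (simp add: restrict_rows_def)
  next
    case True
    have "(\<Sum>f'\<in>F. x f' h k) = x f h k"
      using True xz f by (intro sum_eq_single[OF finF]) (auto simp: S_iff)
    then show ?thesis using True by (simp add: restrict_rows_def sum_fun_apply)
  qed
qed

lemma B_direct_sum: assumes b: "b \<in> B"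
  shows "\<exists>!x. (\<forall>f\<in>F. x f \<in> Blocf G pr iv E \<beta> one e f)
          \<and> (\<forall>f. f \<notin> F \<longrightarrow> x f = 0) \<and> b = (\<Sum>f\<in>F. x f)"
proof (rule ex1I[where a = "\<lambda>f. if f \<in> F then restrict_rows f b else 0"], intro conjI)
  show "\<forall>f\<in>F. (if f \<in> F then restrict_rows f b else 0) \<in> Blocf G pr iv E \<beta> one e f"
    unfolding Blocf_iff using restrict_rows_B b by (auto simp: restrict_rows_def)
  show "\<forall>f. f \<notin> F \<longrightarrow> (if f \<in> F then restrict_rows f b else 0) = 0" by simp
  show "b = (\<Sum>f\<in>F. if f \<in> F then restrict_rows f b else 0)"
    using sum_restrict_rows[OF b] by simp
next
  fix x assume "(\<forall>f\<in>F. x f \<in> Blocf G pr iv E \<beta> one e f) \<and> (\<forall>f. f \<notin> F \<longrightarrow> x f = 0)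
      \<and> b = (\<Sum>f\<in>F. x f)"
  then show "x = (\<lambda>f. if f \<in> F then restrict_rows f b else 0)"
    using Blocf_components by auto
qed

end

theorem lemma3p4:
  fixes G :: "'g set" and pr :: "'g \<Rightarrow> 'g \<Rightarrow> 'g" and iv :: "'g \<Rightarrow> 'g"
    and E :: "'g \<Rightarrow> 'r::ring set" and \<beta> :: "'g \<Rightarrow> 'r \<Rightarrow> 'r" and one :: "'g \<Rightarrow> 'r" and e :: 'g
  assumes fin: "finite G"
    and grp: "groupoid G pr iv"
    and act: "groupoid_action G pr iv E \<beta>"
    and units: "local_units G pr iv E one"
    and e: "e \<in> G0 G pr iv"
  shows
    \<comment> \<open>(i)\<close>
    "{conj_orbit G pr iv E \<beta> one e w | w. w \<in> Wset G pr iv one e}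
       = (\<lambda>f. (\<lambda>l. bsmash e (one e) l) ` (Tset G pr iv e \<inter> Sset G pr iv f)) ` Fset G pr iv e
     \<and> (one e \<noteq> 0 \<longrightarrow>
          inj_on (\<lambda>f. (\<lambda>l. bsmash e (one e) l) ` (Tset G pr iv e \<inter> Sset G pr iv f)) (Fset G pr iv e))
     \<and> (\<forall>f\<in>Fset G pr iv e.
          omega G pr iv one e f = \<Sum>((\<lambda>l. bsmash e (one e) l) ` (Tset G pr iv e \<inter> Sset G pr iv f)))
     \<comment> \<open>(ii)\<close>
     \<and> wunit G pr iv one e = (\<Sum>f\<in>Fset G pr iv e. omega G pr iv one e f)
     \<comment> \<open>(iii)\<close>
     \<and> (\<forall>f\<in>Fset G pr iv e.
          omega G pr iv one e f \<in> Bloc G pr iv E e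
          \<and> bmult G pr iv \<beta> (omega G pr iv one e f) (omega G pr iv one e f) = omega G pr iv one e f
          \<and> (\<forall>b\<in>Bloc G pr iv E e.
               bmult G pr iv \<beta> b (omega G pr iv one e f) = bmult G pr iv \<beta> (omega G pr iv one e f) b))
     \<and> (\<forall>f\<in>Fset G pr iv e. \<forall>f'\<in>Fset G pr iv e. f \<noteq> f' \<longrightarrow>
          bmult G pr iv \<beta> (omega G pr iv one e f) (omega G pr iv one e f') = 0)
     \<comment> \<open>(iv)\<close>
     \<and> (\<forall>f\<in>Fset G pr iv e.
          Blocf G pr iv E \<beta> one e f
            = {b \<in> Bcar G E. \<forall>l g. b l g \<noteq> 0 \<longrightarrow>
                 g \<in> Gloc G pr iv e \<and> l \<in> Tset G pr iv e \<inter> Sset G pr iv f}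
          \<and> sub_ideal (bmult G pr iv \<beta>) (Bloc G pr iv E e) (Blocf G pr iv E \<beta> one e f)
          \<and> omega G pr iv one e f \<in> Blocf G pr iv E \<beta> one e f
          \<and> (\<forall>x\<in>Blocf G pr iv E \<beta> one e f.
               bmult G pr iv \<beta> (omega G pr iv one e f) x = x
               \<and> bmult G pr iv \<beta> x (omega G pr iv one e f) = x))
     \<comment> \<open>(v)\<close>
     \<and> (\<forall>b\<in>Bloc G pr iv E e. \<exists>!x. (\<forall>f\<in>Fset G pr iv e. x f \<in> Blocf G pr iv E \<beta> one e f)
          \<and> (\<forall>f. f \<notin> Fset G pr iv e \<longrightarrow> x f = 0)
          \<and> b = (\<Sum>f\<in>Fset G pr iv e. x f))"
proof -
  interpret local_smash G pr iv e E \<beta> one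
    using fin grp act units e by unfold_locales
  show ?thesis
    by (intro conjI impI ballI orbits_W orbits_W_inj omega_orbit_sum wunit_sum_omega
        omega_B omega_idempotent omega_central omega_orthogonal Blocf_eq Blocf_ideal
        omega_Blocf Blocf_omega_unit B_direct_sum)
qed

end
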